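(* Let $\mathcal A=(Q,\Sigma,\delta,\rho)$ be a connected bireversible Mealy automaton whose labeled orbit tree $\mathfrak t(\mathcal A)$ has no active self-liftable branch, and let $\mathfrak j$ be a jungle tree of $\mathfrak t(\mathcal A)$. Then there is a constant $C$ depending only on $\mathfrak j$ such that for every cyclic $\mathfrak j$-word $\mathbf u$, the map $\rho_{\mathbf u}$ has finite order at most $C$.
   Context: Mealy automata. A Mealy automaton is $\mathcal A=(Q,\Sigma,\delta,\rho)$ with $Q,\Sigma$ finite non-empty sets, $\delta=(\delta_i\colon Q\to Q)_{i\in\Sigma}$, $\rho=(\rho_x\colon\Sigma\to\Sigma)_{x\in Q}$; it has a transition $x\xrightarrow{i\mid\rho_x(i)}\delta_i(x)$ for each $x,i$. It is invertible if each $\rho_x$ is a permutation of $\Sigma$, reversible if each $\delta_i$ is a permutation of $Q$, bireversible if it is invertible, reversible, and for each $j\in\Sigma$ the map $x\mapsto\delta_{\rho_x^{-1}(j)}(x)$ is a permutation of $Q$. It is connected if the directed graph on $Q$ with edges $x\to\delta_i(x)$ is connected. Extensions: $\rho_x(i\mathbf s)=\rho_x(i)\rho_{\delta_i(x)}(\mathbf s)$ on $\Sigma^*$; for $\mathbf u=x_1\cdots x_m\in Q^m$, $\rho_{\mathbf u}=\rho_{x_m}\circ\cdots\circ\rho_{x_1}$; dually $\delta_i(x\mathbf u)=\delta_i(x)\delta_{\rho_x(i)}(\mathbf u)$ on $Q^*$ and $\delta_{i_1\cdots i_m}=\delta_{i_m}\circ\cdots\circ\delta_{i_1}$. The $n$-th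 power $\mathcal A^n$ has stateset $Q^n$ and transitions $\mathbf u\xrightarrow{i\mid\rho_{\mathbf u}(i)}\delta_i(\mathbf u)$; for reversible $\mathcal A$ its connected components are the orbits of $Q^n$ under the maps $\delta_{\mathbf s}$, $\mathbf s\in\Sigma^*$. Orbit tree. For reversible $\mathcal A$, $\mathfrak t(\mathcal A)$ is the rooted tree whose vertices at level $n\ge0$ are the connected components of $\mathcal A^n$ (level $0$: the single component of the empty word), with an edge from the component of $\mathbf u\in Q^n$ to the component of $\mathbf ux$ for all $\mathbf u\in Q^n$, $x\in Q$; the edge $C\to D$ is labeled by the integer $\#D/\#C$. Paths go downward; $\top$ and $\bot$ denote the first and last vertex of a path; the level of an edge or path is the level of its top vertex. A word in $Q^*\cup Q^\omega$ represents the initial path (starting at the root) through the components of its prefixes. An edge $e$ is liftable to an edge $f$ if every word of $\bot(e)$ has a suffix in $\bot(f)$; a path $(e_i)_{i\in I}$ is liftable to a path $(f_i)_{i\in I}$ of the same length if each $e_i$ is liftable to $f_i$. An edge $f$ is a legitimate child of an edge $e$ if $\top(f)=\bot(e)$ and $f$ is liftable to $e$. A path or subtree $\mathfrak s$ is $k$-self-liftable ($k>0$) if for every $i\ge0$ every path in $\mathfrak s$ starting at level $i+k$ is liftable to a path in $\mathfrak s$ starting at level $i$; self-liftable if $k$-self-liftable for some $k>0$. A branch is an infinite initial path; it is active if its sequence of labels is not eventually constantly $1$. Jungle trees. Let $\mathbf e$ be a finite 1-self-liftable initial path of length $n$ whose last edge has at least two legitimate children, all of label $1$. The jungle tree $\mathfrak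 j(\mathbf e)$ is the subtree consisting of $\mathbf e$ (its trunk) together with all edges that are descendants of $\bot(\mathbf e)$ and liftable to the last edge of $\mathbf e$. A jungle tree is a tree of this form. A $\mathfrak j$-word is a word of $Q^*\cup Q^\omega$ representing an initial path of $\mathfrak j$; a cyclic $\mathfrak j$-word is a word $\mathbf u\in Q^*$ all of whose powers $\mathbf u^m$ ($m\ge1$) are $\mathfrak j$-words. *)

theory Defs
  imports Main "HOL-Library.Sublist" "HOL-Library.Extended_Nat"
begin

text \<open>A Mealy automaton over the finite non-empty state type 'q and alphabet type 'a is
  given by d i x (= delta_i(x)) and r x i (= rho_x(i)).\<close>

definition invertible :: "('a \<Rightarrow> 'q \<Rightarrow> 'q) \<Rightarrow> ('q \<Rightarrow> 'a \<Rightarrow> 'a) \<Rightarrow> bool" where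
  "invertible d r \<longleftrightarrow> (\<forall>x. bij (r x))"

definition reversible :: "('a \<Rightarrow> 'q \<Rightarrow> 'q) \<Rightarrow> ('q \<Rightarrow> 'a \<Rightarrow> 'a) \<Rightarrow> bool" where
  "reversible d r \<longleftrightarrow> (\<forall>i. bij (d i))"

definition bireversible :: "('a \<Rightarrow> 'q \<Rightarrow> 'q) \<Rightarrow> ('q \<Rightarrow> 'a \<Rightarrow> 'a) \<Rightarrow> bool" where
  "bireversible d r \<longleftrightarrow> invertible d r \<and> reversible d r \<and>
     (\<forall>j. bij (\<lambda>x. d (inv (r x) j) x))"

definition connected_aut :: "('a \<Rightarrow> 'q \<Rightarrow> 'q) \<Rightarrow> bool" where
  "connected_aut d \<longleftrightarrow>
     (let E = {(x, d i x) | x i. True} in \<forall>x y. (x, y) \<in> (E \<union> E\<inverse>)\<^sup>*)"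

fun rho_w :: "('a \<Rightarrow> 'q \<Rightarrow> 'q) \<Rightarrow> ('q \<Rightarrow> 'a \<Rightarrow> 'a) \<Rightarrow> 'q \<Rightarrow> 'a list \<Rightarrow> 'a list" where
  "rho_w d r x [] = []"
| "rho_w d r x (i # s) = r x i # rho_w d r (d i x) s"

fun rho_u :: "('a \<Rightarrow> 'q \<Rightarrow> 'q) \<Rightarrow> ('q \<Rightarrow> 'a \<Rightarrow> 'a) \<Rightarrow> 'q list \<Rightarrow> 'a list \<Rightarrow> 'a list" where
  "rho_u d r [] = id"
| "rho_u d r (x # u) = rho_u d r u \<circ> rho_w d r x"

fun delta_u :: "('a \<Rightarrow> 'q \<Rightarrow> 'q) \<Rightarrow> ('q \<Rightarrow> 'a \<Rightarrow> 'a) \<Rightarrow> 'a \<Rightarrow> 'q list \<Rightarrow> 'q list" where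
  "delta_u d r i [] = []"
| "delta_u d r i (x # u) = d i x # delta_u d r (r x i) u"

fun delta_s :: "('a \<Rightarrow> 'q \<Rightarrow> 'q) \<Rightarrow> ('q \<Rightarrow> 'a \<Rightarrow> 'a) \<Rightarrow> 'a list \<Rightarrow> 'q list \<Rightarrow> 'q list" where
  "delta_s d r [] = id"
| "delta_s d r (i # s) = delta_s d r s \<circ> delta_u d r i"

text \<open>Connected component of u in the power automaton (orbit under the maps delta_s).\<close>
definition orbit :: "('a \<Rightarrow> 'q \<Rightarrow> 'q) \<Rightarrow> ('q \<Rightarrow> 'a \<Rightarrow> 'a) \<Rightarrow> 'q list \<Rightarrow> 'q list set" where
  "orbit d r u = range (\<lambda>s. delta_s d r s u)"

text \<open>Edges of the orbit tree: pairs (top vertex, bottom vertex).\<close>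
definition tedge :: "('a \<Rightarrow> 'q \<Rightarrow> 'q) \<Rightarrow> ('q \<Rightarrow> 'a \<Rightarrow> 'a) \<Rightarrow> ('q list set \<times> 'q list set) set" where
  "tedge d r = {(orbit d r u, orbit d r (u @ [x])) | u x. True}"

definition label :: "('q list set \<times> 'q list set) \<Rightarrow> nat" where
  "label e = card (snd e) div card (fst e)"

definition lift_edge :: "('q list set \<times> 'q list set) \<Rightarrow> ('q list set \<times> 'q list set) \<Rightarrow> bool" where
  "lift_edge e f \<longleftrightarrow> (\<forall>w\<in>snd e. \<exists>w'\<in>snd f. suffix w' w)"

definition is_path :: "('a \<Rightarrow> 'q \<Rightarrow> 'q) \<Rightarrow> ('q \<Rightarrow> 'a \<Rightarrow> 'a) \<Rightarrow> nat \<Rightarrow> enat \<Rightarrow> (nat \<Rightarrow> 'q list set) \<Rightarrow> bool" where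
  "is_path d r l L v \<longleftrightarrow> (\<exists>u. length u = l \<and> v 0 = orbit d r u) \<and>
     (\<forall>j. enat j < L \<longrightarrow> (v j, v (Suc j)) \<in> tedge d r)"

definition path_in :: "('q list set \<times> 'q list set) set \<Rightarrow> enat \<Rightarrow> (nat \<Rightarrow> 'q list set) \<Rightarrow> bool" where
  "path_in S L v \<longleftrightarrow> (\<forall>j. enat j < L \<longrightarrow> (v j, v (Suc j)) \<in> S)"

text \<open>A subtree / path, given by its set of edges S, is k-self-liftable.\<close>
definition self_liftable_k :: "('a \<Rightarrow> 'q \<Rightarrow> 'q) \<Rightarrow> ('q \<Rightarrow> 'a \<Rightarrow> 'a) \<Rightarrow> nat \<Rightarrow> ('q list set \<times> 'q list set) set \<Rightarrow> bool" where
  "self_liftable_k d r k S \<longleftrightarrow>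
     (\<forall>i L v. is_path d r (i + k) L v \<and> path_in S L v \<longrightarrow>
        (\<exists>w. is_path d r i L w \<and> path_in S L w \<and>
             (\<forall>j. enat j < L \<longrightarrow> lift_edge (v j, v (Suc j)) (w j, w (Suc j)))))"

definition self_liftable :: "('a \<Rightarrow> 'q \<Rightarrow> 'q) \<Rightarrow> ('q \<Rightarrow> 'a \<Rightarrow> 'a) \<Rightarrow> ('q list set \<times> 'q list set) set \<Rightarrow> bool" where
  "self_liftable d r S \<longleftrightarrow> (\<exists>k>0. self_liftable_k d r k S)"

definition branch :: "('a \<Rightarrow> 'q \<Rightarrow> 'q) \<Rightarrow> ('q \<Rightarrow> 'a \<Rightarrow> 'a) \<Rightarrow> (nat \<Rightarrow> 'q list set) \<Rightarrow> bool" where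
  "branch d r v \<longleftrightarrow> is_path d r 0 \<infinity> v"

definition path_edges :: "enat \<Rightarrow> (nat \<Rightarrow> 'q list set) \<Rightarrow> ('q list set \<times> 'q list set) set" where
  "path_edges L v = {(v j, v (Suc j)) | j. enat j < L}"

definition active :: "(nat \<Rightarrow> 'q list set) \<Rightarrow> bool" where
  "active v \<longleftrightarrow> \<not> (\<exists>N. \<forall>j\<ge>N. label (v j, v (Suc j)) = 1)"

definition legit_child :: "('a \<Rightarrow> 'q \<Rightarrow> 'q) \<Rightarrow> ('q \<Rightarrow> 'a \<Rightarrow> 'a) \<Rightarrow> ('q list set \<times> 'q list set) \<Rightarrow> ('q list set \<times> 'q list set) \<Rightarrow> bool" where
  "legit_child d r e f \<longleftrightarrow> f \<in> tedge d r \<and> fst f = snd e \<and> lift_edge f e"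

definition jungle_tree :: "('a \<Rightarrow> 'q \<Rightarrow> 'q) \<Rightarrow> ('q \<Rightarrow> 'a \<Rightarrow> 'a) \<Rightarrow> ('q list set \<times> 'q list set) set \<Rightarrow> bool" where
  "jungle_tree d r J \<longleftrightarrow>
     (\<exists>n v. n > 0 \<and> is_path d r 0 (enat n) v \<and>
        self_liftable_k d r 1 (path_edges (enat n) v) \<and>
        (let e = (v (n - 1), v n) in
           (\<exists>f g. f \<noteq> g \<and> legit_child d r e f \<and> legit_child d r e g) \<and>
           (\<forall>f. legit_child d r e f \<longrightarrow> label f = 1) \<and>
           J = path_edges (enat n) v \<union>
               {f \<in> tedge d r. (snd e, fst f) \<in> (tedge d r)\<^sup>* \<and> lift_edge f e}))"

definition j_word :: "('a \<Rightarrow> 'q \<Rightarrow> 'q) \<Rightarrow> ('q \<Rightarrow> 'a \<Rightarrow> 'a) \<Rightarrow> ('q list set \<times> 'q list set) set \<Rightarrow> 'q list \<Rightarrow> bool" where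
  "j_word d r J u \<longleftrightarrow>
     (\<forall>j < length u. (orbit d r (take j u), orbit d r (take (Suc j) u)) \<in> J)"

definition cyclic_j_word :: "('a \<Rightarrow> 'q \<Rightarrow> 'q) \<Rightarrow> ('q \<Rightarrow> 'a \<Rightarrow> 'a) \<Rightarrow> ('q list set \<times> 'q list set) set \<Rightarrow> 'q list \<Rightarrow> bool" where
  "cyclic_j_word d r J u \<longleftrightarrow> (\<forall>m\<ge>1. j_word d r J (concat (replicate m u)))"

end

theory Submission
  imports Defs
begin

text \<open>
  Let \<open>B\<close> be the bottom vertex of the trunk, a component of words of length \<open>n\<close>, and let
  \<open>u\<close> be a cyclic jungle word. Every length-\<open>n\<close> factor of a power of \<open>u\<close> lies in \<open>B\<close>, and
  every length-\<open>(n+1)\<close> factor spans a legitimate child of the last trunk edge. That child has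
  label 1, so the words of its component are determined by their length-\<open>n\<close> prefixes.
  Hence, for every input word \<open>s\<close>, each letter of \<open>\<delta>\<^sub>s(u\<^sup>M)\<close> is determined by the
  preceding \<open>n\<close> letters and its position modulo \<open>|u|\<close>. Pigeonhole on the \<open>#B\<close> possible
  windows at block boundaries makes \<open>\<delta>\<^sub>s(u\<^sup>M)\<close> periodic after \<open>#B\<close> blocks, with period
  dividing \<open>(#B)! |u|\<close>. The letter action of \<open>K\<close> periods is trivial once \<open>K\<close> is a multiple
  of the order of every permutation of \<open>\<Sigma>\<close>. Therefore \<open>\<rho>\<close> agrees on \<open>u\<^sup>b\<close> and
  \<open>u\<^sup>b\<^sup>+\<^sup>E\<close> for \<open>b = #B\<close>, \<open>E = b! K\<close>, and cancelling gives \<open>(\<rho>\<^sub>u)\<^sup>E = id\<close>.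

  Neither connectedness nor the absence of active self-liftable branches is needed.
\<close>

fun rho_letter :: "('q \<Rightarrow> 'a \<Rightarrow> 'a) \<Rightarrow> 'q list \<Rightarrow> 'a \<Rightarrow> 'a" where
  "rho_letter r [] = id"
| "rho_letter r (x # w) = rho_letter r w \<circ> r x"

lemma length_delta_u [simp]: "length (delta_u d r i w) = length w"
  by (induction w arbitrary: i) auto

lemma length_delta_s [simp]: "length (delta_s d r s w) = length w"
  by (induction s arbitrary: w) auto

lemma length_rho_w [simp]: "length (rho_w d r x s) = length s"
  by (induction s arbitrary: x) auto

lemma rho_u_Nil_input [simp]: "rho_u d r w [] = []"
  by (induction w) auto

lemma rho_u_Cons_input: "rho_u d r w (i # s) = rho_letter r w i # rho_u d r (delta_u d r i w) s"
  by (induction w arbitrary: i s) auto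

lemma rho_letter_append: "rho_letter r (w @ w') = rho_letter r w' \<circ> rho_letter r w"
  by (induction w) auto

lemma rho_u_append: "rho_u d r (w @ w') = rho_u d r w' \<circ> rho_u d r w"
  by (induction w) auto

lemma delta_u_append: "delta_u d r i (w @ w') = delta_u d r i w @ delta_u d r (rho_letter r w i) w'"
  by (induction w arbitrary: i) auto

lemma delta_s_append_states:
  "delta_s d r s (w @ w') = delta_s d r s w @ delta_s d r (rho_u d r w s) w'"
  by (induction s arbitrary: w w') (simp_all add: delta_u_append rho_u_Cons_input)

lemma delta_s_append: "delta_s d r (s @ t) = delta_s d r t \<circ> delta_s d r s"
  by (induction s) auto

lemma rho_u_append_input: "rho_u d r w (s @ t) = rho_u d r w s @ rho_u d r (delta_s d r s w) t"
  by (induction s arbitrary: w) (auto simp: rho_u_Cons_input)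

lemma rho_u_concat_replicate: "rho_u d r (concat (replicate k w)) = rho_u d r w ^^ k"
  by (induction k) (auto simp: rho_u_append funpow_swap1)

lemma delta_s_concat_replicate: "delta_s d r (concat (replicate k s)) = delta_s d r s ^^ k"
  by (induction k) (auto simp: delta_s_append funpow_swap1)

lemma rho_letter_concat_replicate: "rho_letter r (concat (replicate k w)) = rho_letter r w ^^ k"
  by (induction k) (auto simp: rho_letter_append funpow_swap1)

lemma take_delta_s:
  assumes "n \<le> length w"
  shows "take n (delta_s d r s w) = delta_s d r s (take n w)"
  using delta_s_append_states[of d r s "take n w" "drop n w"] assms by simp

lemma rho_u_eq_if_rho_letter_eq:
  assumes "\<And>s. rho_letter r (delta_s d r s w) = rho_letter r (delta_s d r s w')"
  shows "rho_u d r w = rho_u d r w'"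
proof
  fix s show "rho_u d r w s = rho_u d r w' s"
    by (induction s rule: rev_induct) (simp_all add: rho_u_append_input rho_u_Cons_input assms)
qed

lemma inj_delta_s:
  assumes "reversible d r"
  shows "inj (delta_s d r s)"
proof -
  have inj_d: "inj (d i)" for i
    using assms bij_is_inj unfolding reversible_def by blast
  have inj_delta_u: "inj (delta_u d r i)" for i
  proof (rule injI)
    show "delta_u d r i w = delta_u d r i w' \<Longrightarrow> w = w'" for w w'
    proof (induction w arbitrary: i w')
      case Nil then show ?case by (metis length_0_conv length_delta_u)
    next
      case (Cons x w)
      then show ?case by (cases w') (auto dest: injD[OF inj_d])
    qed
  qed
  show ?thesis
    by (induction s) (simp, metis delta_s.simps(2) inj_compose inj_delta_u)
qed

lemma inj_rho_u:
  assumes "invertible d r"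
  shows "inj (rho_u d r w)"
proof -
  have inj_r: "inj (r x)" for x
    using assms bij_is_inj unfolding invertible_def by blast
  have inj_rho_w: "inj (rho_w d r x)" for x
  proof (rule injI)
    show "rho_w d r x s = rho_w d r x s' \<Longrightarrow> s = s'" for s s'
    proof (induction s arbitrary: x s')
      case Nil then show ?case by (metis length_0_conv length_rho_w)
    next
      case (Cons i s)
      then show ?case by (cases s') (auto dest: injD[OF inj_r])
    qed
  qed
  show ?thesis
    by (induction w) (simp, metis rho_u.simps(2) inj_compose inj_rho_w)
qed

lemma bij_rho_letter: "invertible d r \<Longrightarrow> bij (rho_letter r w)"
  unfolding invertible_def by (induction w) (simp_all add: bij_comp)

lemma pigeonhole_atMost:
  assumes "finite S" "\<And>i. i \<le> N \<Longrightarrow> f i \<in> S" "card S \<le> N"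
  obtains i j where "i < j" "j \<le> N" "f i = f j"
proof -
  have "\<not> inj_on f {..N}"
  proof
    assume "inj_on f {..N}"
    then have "card {..N} \<le> card S"
      using card_inj_on_le[of f "{..N}" S] assms(1,2) by auto
    with assms(3) show False by simp
  qed
  then have "\<exists>i j. i < j \<and> j \<le> N \<and> f i = f j"
    unfolding inj_on_def by (metis atMost_iff less_imp_le_nat linorder_neqE_nat)
  with that show ?thesis by blast
qed

lemma inj_funpow_returns:
  assumes "inj f" "finite S" "\<And>y. y \<in> S \<Longrightarrow> f y \<in> S" "x \<in> S"
  obtains k where "0 < k" "k \<le> card S" "(f ^^ k) x = x"
proof -
  have "(f ^^ i) x \<in> S" for i
    by (induction i) (simp_all add: assms(3,4))
  then obtain i j where ij: "i < j" "j \<le> card S" "(f ^^ i) x = (f ^^ j) x"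
    by (rule pigeonhole_atMost[OF assms(2)]) auto
  have "(f ^^ i) ((f ^^ (j - i)) x) = (f ^^ (i + (j - i))) x"
    by (simp only: funpow_add comp_apply)
  with ij have "(f ^^ i) ((f ^^ (j - i)) x) = (f ^^ i) x"
    by simp
  then have "(f ^^ (j - i)) x = x"
    using inj_fn[OF assms(1), of i] by (simp add: inj_eq)
  with ij show ?thesis
    by (intro that[of "j - i"]) auto
qed

lemma bij_funpow_fact_card_eq_id:
  fixes g :: "'a::finite \<Rightarrow> 'a"
  assumes "bij g"
  shows "g ^^ fact (card (UNIV :: ('a \<Rightarrow> 'a) set)) = id"
proof -
  have left_comp_funpow: "((\<circ>) g ^^ k) id = g ^^ k" for k
    by (induction k) simp_all
  have "inj ((\<circ>) g)"
    using assms by (simp add: bij_betw_def inj_def fun_eq_iff)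
  then obtain k where "0 < k" "k \<le> card (UNIV :: ('a \<Rightarrow> 'a) set)" "g ^^ k = id"
    using inj_funpow_returns[of "(\<circ>) g" UNIV id] left_comp_funpow by auto
  moreover from calculation have "k dvd fact (card (UNIV :: ('a \<Rightarrow> 'a) set))"
    by (simp add: dvd_fact)
  ultimately show ?thesis
    by (metis dvdE funpow_mult id_funpow)
qed

definition list_periodic :: "nat \<Rightarrow> 'b list \<Rightarrow> bool" where
  "list_periodic p xs \<longleftrightarrow> (\<forall>i. i + p < length xs \<longrightarrow> xs ! i = xs ! (i + p))"

lemma list_periodic_drop: "list_periodic p xs \<Longrightarrow> list_periodic p (drop k xs)"
  unfolding list_periodic_def by (simp add: add.assoc)

lemma list_periodic_mult:
  assumes "list_periodic p xs"
  shows "list_periodic (q * p) xs"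
  unfolding list_periodic_def
proof (intro allI impI)
  show "i + q * p < length xs \<Longrightarrow> xs ! i = xs ! (i + q * p)" for i
  proof (induction q)
    case (Suc q)
    then have "xs ! i = xs ! (i + q * p)"
      by simp
    also have "\<dots> = xs ! (i + q * p + p)"
      using assms Suc.prems unfolding list_periodic_def by simp
    finally show ?case
      by (simp add: algebra_simps)
  qed simp
qed

lemma take_mult_eq_concat_replicate:
  assumes "list_periodic p xs" and "K * p \<le> length xs"
  shows "take (K * p) xs = concat (replicate K (take p xs))"
  using assms(2)
proof (induction K)
  case (Suc K)
  have "take (K * p) (drop p xs) = take (K * p) xs"
  proof (rule nth_equalityI)
    fix i
    assume "i < length (take (K * p) (drop p xs))"
    then show "take (K * p) (drop p xs) ! i = take (K * p) xs ! i"
      using assms(1) Suc.prems unfolding list_periodic_def by (simp add: add.commute)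
  qed (use Suc.prems in simp)
  then show ?case
    using Suc by (simp add: take_add)
qed simp

lemma length_concat_replicate [simp]: "length (concat (replicate M u)) = M * length u"
  by (simp add: length_concat sum_list_replicate)

lemma take_concat_replicate:
  assumes "m \<le> M"
  shows "take (m * length u) (concat (replicate M u)) = concat (replicate m u)"
proof -
  have "concat (replicate M u) = concat (replicate m u) @ concat (replicate (M - m) u)"
    using assms by (metis concat_append le_add_diff_inverse replicate_add)
  then show ?thesis
    by simp
qed

lemma nth_concat_replicate:
  "i < M * length u \<Longrightarrow> concat (replicate M u) ! i = u ! (i mod length u)"
proof (induction M arbitrary: i)
  case (Suc M)
  then show ?case
    by (cases "i < length u") (simp_all add: nth_append mod_if)
qed simp

lemma take_drop_concat_replicate_cong:
  assumes "k mod length u = k' mod length u"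
    and "k + l \<le> M * length u" and "k' + l \<le> M * length u"
  shows "take l (drop k (concat (replicate M u))) = take l (drop k' (concat (replicate M u)))"
proof (rule nth_equalityI)
  fix i
  assume "i < length (take l (drop k (concat (replicate M u))))"
  then have "i < l"
    by simp
  moreover have "(k + i) mod length u = (k' + i) mod length u"
    using assms(1) by (metis mod_add_left_eq)
  ultimately show "take l (drop k (concat (replicate M u))) ! i = take l (drop k' (concat (replicate M u))) ! i"
    using assms(2,3) by (simp add: nth_concat_replicate)
qed (use assms in simp)

definition window_determined :: "nat \<Rightarrow> nat \<Rightarrow> 'b list \<Rightarrow> bool" where
  "window_determined L n xs \<longleftrightarrow>
     (\<forall>k k'. k mod L = k' mod L \<longrightarrow> k + n < length xs \<longrightarrow> k' + n < length xs \<longrightarrow>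
        take n (drop k xs) = take n (drop k' xs) \<longrightarrow> xs ! (k + n) = xs ! (k' + n))"

lemma list_periodic_if_window_eq:
  assumes det: "window_determined L n xs" and "L dvd p"
    and window: "take n (drop k xs) = take n (drop (k + p) xs)"
  shows "list_periodic p (drop k xs)"
proof -
  have "xs ! (k + i) = xs ! (k + p + i)" if "k + p + i < length xs" for i
    using that
  proof (induction i rule: less_induct)
    case (less i)
    show ?case
    proof (cases "i < n")
      case True
      then have "take n (drop k xs) ! i = take n (drop (k + p) xs) ! i"
        using window by simp
      with True less.prems show ?thesis
        by simp
    next
      case False
      then obtain j where i: "i = j + n"
        using le_Suc_ex not_less by (metis add.commute)
      have windows_eq: "take n (drop (k + j) xs) = take n (drop (k + p + j) xs)"
      proof (rule nth_equalityI)
        fix l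
        assume "l < length (take n (drop (k + j) xs))"
        then have "l < n" "k + j + l < length xs"
          by auto
        moreover have "xs ! (k + (j + l)) = xs ! (k + p + (j + l))"
          using less.IH[of "j + l"] less.prems i \<open>l < n\<close> by simp
        ultimately show "take n (drop (k + j) xs) ! l = take n (drop (k + p + j) xs) ! l"
          using less.prems i by (simp add: add.assoc)
      qed (use less.prems i in simp)
      have "(k + j) mod L = (k + p + j) mod L"
        using \<open>L dvd p\<close> by (metis add.commute add.left_commute dvd_def mod_mult_self1 mult.commute)
      moreover have "k + j + n < length xs" "k + p + j + n < length xs"
        using less.prems i by simp_all
      ultimately have "xs ! (k + j + n) = xs ! (k + p + j + n)"
        using det windows_eq unfolding window_determined_def by blast
      then show ?thesis
        using i by (simp add: add.assoc)
    qed
  qed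
  then show ?thesis
    unfolding list_periodic_def by (simp add: add.commute add.left_commute)
qed

lemma orbit_self: "w \<in> orbit d r w"
  unfolding orbit_def by (metis delta_s.simps(1) id_apply rangeI)

lemma orbit_subset: "y \<in> orbit d r w \<Longrightarrow> orbit d r y \<subseteq> orbit d r w"
  unfolding orbit_def by (auto simp: image_iff) (metis comp_apply delta_s_append)

lemma length_orbit: "y \<in> orbit d r w \<Longrightarrow> length y = length w"
  unfolding orbit_def by auto

lemma finite_orbit: "finite (orbit d r (w :: 'q::finite list))"
proof (rule finite_subset)
  show "orbit d r w \<subseteq> {v. length v = length w}"
    using length_orbit by blast
  show "finite {v :: 'q list. length v = length w}"
    using finite_lists_length_eq[of "UNIV :: 'q set"] by simp
qed

lemma orbit_sym:
  fixes w :: "'q::finite list"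
  assumes "reversible d r" and "y \<in> orbit d r w"
  shows "w \<in> orbit d r y"
proof -
  obtain s where y: "y = delta_s d r s w"
    using assms(2) unfolding orbit_def by auto
  have "finite {v :: 'q list. length v = length w}"
    using finite_lists_length_eq[of "UNIV :: 'q set"] by simp
  then obtain k where "0 < k" "(delta_s d r s ^^ k) w = w"
    by (rule inj_funpow_returns[OF inj_delta_s[OF assms(1)], where x = w]) auto
  then have "delta_s d r (concat (replicate (k - 1) s)) y = w"
    by (simp add: y delta_s_concat_replicate) (metis Suc_pred comp_apply funpow_Suc_right)
  then show ?thesis
    unfolding orbit_def by (metis rangeI)
qed

lemma orbit_eq:
  fixes w :: "'q::finite list"
  assumes "reversible d r" and "y \<in> orbit d r w"
  shows "orbit d r y = orbit d r w"
  using orbit_subset[OF assms(2)] orbit_subset[OF orbit_sym[OF assms]] by blast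

lemma factor_delta_s_in_orbit:
  assumes "k + l \<le> length w"
  shows "take l (drop k (delta_s d r s w)) \<in> orbit d r (take l (drop k w))"
proof -
  have "delta_s d r s w = delta_s d r s (take k w) @ delta_s d r (rho_u d r (take k w) s) (drop k w)"
    by (metis append_take_drop_id delta_s_append_states)
  then have "take l (drop k (delta_s d r s w)) = delta_s d r (rho_u d r (take k w) s) (take l (drop k w))"
    using assms by (simp add: take_delta_s)
  then show ?thesis
    unfolding orbit_def by auto
qed

lemma card_orbit_ge_double:
  fixes z :: "'q::finite list"
  assumes rev: "reversible d r" and n: "n \<le> length z"
    and w: "w1 \<in> orbit d r z" "w2 \<in> orbit d r z" "take n w1 = take n w2" "w1 \<noteq> w2"
  shows "2 * card (orbit d r (take n z)) \<le> card (orbit d r z)"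
proof -
  define B where "B = orbit d r (take n z)"
  have take_w: "take n w \<in> B \<and> length w = length z" if w_in: "w \<in> {w1, w2}" for w
  proof -
    obtain s where "w = delta_s d r s z"
      using w_in w(1,2) unfolding orbit_def by auto
    then show ?thesis
      using factor_delta_s_in_orbit[of 0 n z d r s] n unfolding B_def by simp
  qed
  then have "B = orbit d r (take n w1)"
    unfolding B_def using orbit_eq[OF rev] by blast
  then have "\<forall>y\<in>B. \<exists>s. y = delta_s d r s (take n w1)"
    unfolding orbit_def by blast
  then have "\<exists>t. \<forall>y\<in>B. y = delta_s d r (t y) (take n w1)"
    by (rule bchoice)
  then obtain t where t: "\<And>y. y \<in> B \<Longrightarrow> y = delta_s d r (t y) (take n w1)"
    by blast
  \<comment> \<open>Transporting \<open>w1\<close> and \<open>w2\<close> along \<open>B\<close> gives \<open>2 #B\<close> distinct words in the component of \<open>z\<close>.\<close>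
  define g where "g = (\<lambda>(y, w). delta_s d r (t y) w)"
  have take_g: "take n (g (y, w)) = y" if "y \<in> B" "w \<in> {w1, w2}" for y w
    using that(2) t[OF that(1)] take_w[OF that(2)] w(3) n by (auto simp: g_def take_delta_s)
  have "inj_on g (B \<times> {w1, w2})"
  proof (rule inj_onI, clarify)
    fix y w y' w'
    assume yw: "y \<in> B" "w \<in> {w1, w2}" "y' \<in> B" "w' \<in> {w1, w2}" "g (y, w) = g (y', w')"
    then have "y = y'"
      using take_g[OF yw(1,2)] take_g[OF yw(3,4)] by simp
    with yw(5) show "y = y' \<and> w = w'"
      using inj_delta_s[OF rev] by (simp add: g_def inj_eq)
  qed
  moreover have "g (y, w) \<in> orbit d r z" if "w \<in> {w1, w2}" for y w
  proof -
    have "delta_s d r (t y) w \<in> orbit d r w"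
      unfolding orbit_def by simp
    moreover have "w \<in> orbit d r z"
      using that w(1,2) by auto
    ultimately have "delta_s d r (t y) w \<in> orbit d r z"
      using orbit_subset by blast
    then show ?thesis
      by (simp add: g_def)
  qed
  then have "g ` (B \<times> {w1, w2}) \<subseteq> orbit d r z"
    by auto
  ultimately have "card (B \<times> {w1, w2}) \<le> card (orbit d r z)"
    by (rule card_inj_on_le[OF _ _ finite_orbit])
  then show ?thesis
    using w(4) unfolding B_def by (simp add: card_cartesian_product)
qed

lemma inj_on_take_orbit_if_label_one:
  fixes z :: "'q::finite list"
  assumes rev: "reversible d r" and n: "n \<le> length z"
    and label: "label (orbit d r (take n z), orbit d r z) = 1"
  shows "inj_on (take n) (orbit d r z)"
proof (rule inj_onI, rule ccontr)
  fix w1 w2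
  assume "w1 \<in> orbit d r z" "w2 \<in> orbit d r z" "take n w1 = take n w2" "w1 \<noteq> w2"
  then have "2 * card (orbit d r (take n z)) \<le> card (orbit d r z)"
    by (rule card_orbit_ge_double[OF rev n])
  moreover have "0 < card (orbit d r (take n z))"
    using finite_orbit[of d r "take n z"] orbit_self[of "take n z" d r] card_gt_0_iff by blast
  moreover have "card (orbit d r z) div card (orbit d r (take n z)) < 2"
    using label unfolding label_def by simp
  ultimately show False
    using div_less_iff_less_mult[of "card (orbit d r (take n z))" "card (orbit d r z)" 2] by simp
qed

lemma legit_child_window:
  fixes z :: "'q::finite list"
  assumes rev: "reversible d r" and e: "snd e = orbit d r y"
    and z: "length z = Suc n" "take n z \<in> snd e" "drop 1 z \<in> snd e"
  shows "legit_child d r e (orbit d r (take n z), orbit d r z)"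
proof -
  have top: "orbit d r (take n z) = snd e"
    using z(2) unfolding e by (rule orbit_eq[OF rev])
  have "z = take n z @ [z ! n]"
    using z(1) take_Suc_conv_app_nth[of n z] by simp
  then have edge: "(orbit d r (take n z), orbit d r z) \<in> tedge d r"
    unfolding tedge_def by (metis (mono_tags, lifting) mem_Collect_eq)
  have "\<exists>w'\<in>snd e. suffix w' w" if w: "w \<in> orbit d r z" for w
  proof -
    obtain s where "w = delta_s d r s z"
      using w unfolding orbit_def by auto
    then have "drop 1 w \<in> orbit d r (drop 1 z)"
      using factor_delta_s_in_orbit[of 1 n z d r s] z(1) by simp
    then have "drop 1 w \<in> snd e"
      using orbit_subset z(3) e by blast
    then show ?thesis
      using suffix_drop by blast
  qed
  then show ?thesis
    unfolding legit_child_def lift_edge_def using edge top by simp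
qed

lemma inj_on_take_orbit_window:
  fixes z :: "'q::finite list"
  assumes rev: "reversible d r" and label_one: "\<And>f. legit_child d r e f \<Longrightarrow> label f = 1"
    and e: "snd e = orbit d r y"
    and z: "length z = Suc n" "take n z \<in> snd e" "drop 1 z \<in> snd e"
  shows "inj_on (take n) (orbit d r z)"
  using legit_child_window[OF rev e z] z(1)
  by (intro inj_on_take_orbit_if_label_one[OF rev] label_one) simp_all

locale uniquely_extending_windows =
  fixes d :: "'a::finite \<Rightarrow> 'q \<Rightarrow> 'q" and r :: "'q \<Rightarrow> 'a \<Rightarrow> 'a"
    and n :: nat and B :: "'q list set" and u :: "'q list"
  assumes finite_B: "finite B"
    and orbit_closed: "\<And>y. y \<in> B \<Longrightarrow> orbit d r y \<subseteq> B"
    and windows: "\<And>M k. k + n \<le> M * length u \<Longrightarrow> take n (drop k (concat (replicate M u))) \<in> B"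
    and windows_extend_uniquely: "\<And>M k. k + Suc n \<le> M * length u \<Longrightarrow>
      inj_on (take n) (orbit d r (take (Suc n) (drop k (concat (replicate M u)))))"
begin

lemma window_determined_delta_s:
  "window_determined (length u) n (delta_s d r s (concat (replicate M u)))"
  (is "window_determined _ _ (delta_s d r s ?U)")
  unfolding window_determined_def
proof (intro allI impI)
  fix k k'
  let ?W = "delta_s d r s ?U"
  assume "k mod length u = k' mod length u" and k: "k + n < length ?W" and k': "k' + n < length ?W"
    and windows: "take n (drop k ?W) = take n (drop k' ?W)"
  then have "take (Suc n) (drop k' ?U) = take (Suc n) (drop k ?U)"
    by (intro take_drop_concat_replicate_cong) simp_all
  then have "take (Suc n) (drop k ?W) \<in> orbit d r (take (Suc n) (drop k ?U))"
    and "take (Suc n) (drop k' ?W) \<in> orbit d r (take (Suc n) (drop k ?U))"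
    using k k' factor_delta_s_in_orbit[of k "Suc n" ?U] factor_delta_s_in_orbit[of k' "Suc n" ?U]
    by (metis Suc_leI add_Suc_right length_delta_s)+
  moreover have "take n (take (Suc n) (drop k ?W)) = take n (take (Suc n) (drop k' ?W))"
    using windows by simp
  moreover have "inj_on (take n) (orbit d r (take (Suc n) (drop k ?U)))"
    using windows_extend_uniquely[of k M] k by simp
  ultimately have "take (Suc n) (drop k ?W) = take (Suc n) (drop k' ?W)"
    by (metis inj_onD)
  then have "take (Suc n) (drop k ?W) ! n = take (Suc n) (drop k' ?W) ! n"
    by simp
  with k k' show "?W ! (k + n) = ?W ! (k' + n)"
    by simp
qed

lemma list_periodic_delta_s_power:
  assumes M: "card B * length u + n \<le> M * length u"
  shows "list_periodic (fact (card B) * length u)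
    (drop (card B * length u) (delta_s d r s (concat (replicate M u))))"
proof -
  define L where "L = length u"
  define W where "W = delta_s d r s (concat (replicate M u))"
  have "take n (drop (j * L) W) \<in> B" if "j \<le> card B" for j
  proof -
    have "j * L + n \<le> M * L"
      using M that mult_le_mono1[of j "card B" L] unfolding L_def by linarith
    then show ?thesis
      using factor_delta_s_in_orbit[of "j * L" n] windows orbit_closed unfolding W_def L_def
      by (metis length_concat_replicate subsetD)
  qed
  then obtain i i' where ii': "i < i'" "i' \<le> card B"
      "take n (drop (i * L) W) = take n (drop (i' * L) W)"
    by (rule pigeonhole_atMost[OF finite_B]) auto
  then have "take n (drop (i * L) W) = take n (drop (i * L + (i' - i) * L) W)"
    by (simp flip: add_mult_distrib)
  then have "list_periodic ((i' - i) * L) (drop (i * L) W)"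
    using window_determined_delta_s unfolding W_def L_def
    by (intro list_periodic_if_window_eq) auto
  moreover have "i' - i dvd fact (card B)"
    using ii' by (simp add: dvd_fact)
  then obtain q where "fact (card B) = (i' - i) * q"
    by (rule dvdE)
  ultimately have "list_periodic (fact (card B) * L) (drop (i * L) W)"
    using list_periodic_mult[of "(i' - i) * L" _ q] by (simp add: ac_simps)
  then have "list_periodic (fact (card B) * L) (drop ((card B - i) * L) (drop (i * L) W))"
    by (rule list_periodic_drop)
  moreover have "(card B - i) * L + i * L = card B * L"
    using ii' by (simp flip: add_mult_distrib)
  ultimately show ?thesis
    unfolding W_def L_def by simp
qed

lemma rho_letter_delta_s_power_stable:
  assumes inv: "invertible d r"
  defines "E \<equiv> fact (card B) * fact (card (UNIV :: ('a \<Rightarrow> 'a) set)) :: nat"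
  shows "rho_letter r (delta_s d r s (concat (replicate (card B + E) u))) =
    rho_letter r (delta_s d r s (concat (replicate (card B) u)))"
proof (cases "u = []")
  case False
  define b where "b = card B"
  define L where "L = length u"
  define M where "M = b + E + n + 1"
  define W where "W = delta_s d r s (concat (replicate M u))"
  define P where "P = fact b * L"
  have "0 < L"
    using False unfolding L_def by simp
  then have "n + 1 \<le> (n + 1) * L"
    using mult_le_mono2[of 1 L "n + 1"] by simp
  moreover have "M * L = b * L + E * L + (n + 1) * L"
    unfolding M_def by (simp add: algebra_simps)
  ultimately have "b * L + n \<le> M * L" "b * L + E * L \<le> M * L"
    by linarith+
  have prefix: "take (m * L) W = delta_s d r s (concat (replicate m u))" if "m \<le> M" for m
    using take_delta_s[of "m * L" "concat (replicate M u)"] take_concat_replicate[OF that, of u] that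
    unfolding W_def L_def by simp
  have periodic: "list_periodic P (drop (b * L) W)"
    unfolding P_def b_def L_def W_def
    by (rule list_periodic_delta_s_power) (use \<open>b * L + n \<le> M * L\<close> in \<open>simp add: b_def L_def\<close>)
  have EL: "E * L = fact (card (UNIV :: ('a \<Rightarrow> 'a) set)) * P"
    unfolding E_def P_def b_def by simp
  have "E * L \<le> length (drop (b * L) W)"
    using \<open>b * L + E * L \<le> M * L\<close> unfolding W_def L_def by simp
  then have "take (E * L) (drop (b * L) W) =
      concat (replicate (fact (card (UNIV :: ('a \<Rightarrow> 'a) set))) (take P (drop (b * L) W)))"
    unfolding EL by (rule take_mult_eq_concat_replicate[OF periodic])
  then have cycle: "rho_letter r (take (E * L) (drop (b * L) W)) = id"
    by (simp add: rho_letter_concat_replicate bij_funpow_fact_card_eq_id bij_rho_letter[OF inv])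
  moreover have "take ((b + E) * L) W = take (b * L) W @ take (E * L) (drop (b * L) W)"
    by (simp add: add_mult_distrib take_add)
  ultimately have "delta_s d r s (concat (replicate (b + E) u)) =
      delta_s d r s (concat (replicate b u)) @ take (E * L) (drop (b * L) W)"
    using prefix[of b] prefix[of "b + E"] unfolding M_def by simp
  with cycle show ?thesis
    unfolding b_def by (simp add: rho_letter_append)
qed simp

lemma rho_u_funpow_fact_eq_id:
  assumes inv: "invertible d r"
  shows "rho_u d r u ^^ (fact (card B) * fact (card (UNIV :: ('a \<Rightarrow> 'a) set))) = id"
proof -
  define E :: nat where "E = fact (card B) * fact (card (UNIV :: ('a \<Rightarrow> 'a) set))"
  have "rho_u d r (concat (replicate (card B + E) u)) = rho_u d r (concat (replicate (card B) u))"
    unfolding E_def by (intro rho_u_eq_if_rho_letter_eq rho_letter_delta_s_power_stable inv)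
  then have "rho_u d r u ^^ card B \<circ> rho_u d r u ^^ E = rho_u d r u ^^ card B \<circ> id"
    by (simp add: rho_u_concat_replicate funpow_add)
  moreover have "inj (rho_u d r u ^^ card B)"
    by (simp add: inj_rho_u[OF inv])
  ultimately show ?thesis
    unfolding E_def by (simp add: fun_eq_iff inj_eq)
qed

end

lemma is_path_vertex_orbit:
  assumes path: "is_path d r l L v" and "enat j \<le> L"
  shows "\<exists>w. length w = l + j \<and> v j = orbit d r w"
  using assms(2)
proof (induction j)
  case 0
  then show ?case
    using path unfolding is_path_def by auto
next
  case (Suc j)
  then have "enat j < L"
    by (simp add: Suc_ile_eq)
  then obtain w where w: "length w = l + j" "v j = orbit d r w"
    using Suc.IH order.strict_implies_order by blast
  have "(v j, v (Suc j)) \<in> tedge d r"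
    using path \<open>enat j < L\<close> unfolding is_path_def by blast
  then obtain a x where ax: "v j = orbit d r a" "v (Suc j) = orbit d r (a @ [x])"
    unfolding tedge_def by blast
  have "length a = l + j"
    using w ax(1) orbit_self length_orbit by metis
  with ax(2) show ?case
    by (intro exI[of _ "a @ [x]"]) simp
qed

lemma cyclic_j_word_windows:
  assumes path: "is_path d r 0 (enat n) v" and "0 < n"
    and J: "J \<subseteq> path_edges (enat n) v \<union> {f. lift_edge f e}" and e: "snd e = v n"
    and cyclic: "cyclic_j_word d r J u" and k: "k + n \<le> M * length u"
  shows "take n (drop k (concat (replicate M u))) \<in> v n"
proof -
  define L where "L = length u"
  define U where "U = concat (replicate (Suc M) u)"
  define j where "j = k + L + n - 1"
  have "0 < L"
    using k \<open>0 < n\<close> unfolding L_def by (cases "length u") simp_all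
  have j: "Suc j = k + L + n" "j < length U"
    using k \<open>0 < n\<close> unfolding j_def U_def L_def by simp_all
  have "1 \<le> Suc M"
    by simp
  then have "j_word d r J U"
    using cyclic unfolding cyclic_j_word_def U_def by blast
  then have edge: "(orbit d r (take j U), orbit d r (take (Suc j) U)) \<in> J"
    using j unfolding j_word_def by blast
  have "(orbit d r (take j U), orbit d r (take (Suc j) U)) \<notin> path_edges (enat n) v"
  proof
    assume "(orbit d r (take j U), orbit d r (take (Suc j) U)) \<in> path_edges (enat n) v"
    then obtain i where i: "i < n" "orbit d r (take j U) = v i"
      unfolding path_edges_def by auto
    moreover obtain w where "length w = i" "v i = orbit d r w"
      using is_path_vertex_orbit[OF path, of i] i by auto
    ultimately have "length (take j U) = i"
      using orbit_self length_orbit by metis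
    with i j \<open>0 < L\<close> show False
      by simp
  qed
  with edge J have "lift_edge (orbit d r (take j U), orbit d r (take (Suc j) U)) e"
    by blast
  then obtain w' where w': "w' \<in> v n" "suffix w' (take (Suc j) U)"
    unfolding lift_edge_def e using orbit_self by fastforce
  obtain w0 where "length w0 = n" "v n = orbit d r w0"
    using is_path_vertex_orbit[OF path, of n] by auto
  then have "length w' = n"
    using w'(1) length_orbit by blast
  moreover obtain zs where zs: "take (Suc j) U = zs @ w'"
    using w'(2) unfolding suffix_def by blast
  moreover have "length (take (Suc j) U) = k + L + n"
    using j by simp
  ultimately have "w' = drop (k + L) (take (Suc j) U)"
    by simp
  also have "\<dots> = take n (drop k (concat (replicate M u)))"
    unfolding j(1) U_def L_def by (simp add: drop_take add.commute)
  finally show ?thesis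
    using w'(1) by simp
qed

lemma jungle_tree_trunk:
  assumes "jungle_tree d r J"
  shows "\<exists>n v e. 0 < n \<and> is_path d r 0 (enat n) v \<and> snd e = v n \<and>
    (\<forall>f. legit_child d r e f \<longrightarrow> label f = 1) \<and>
    J \<subseteq> path_edges (enat n) v \<union> {f. lift_edge f e}"
  using assms unfolding jungle_tree_def Let_def by (metis (no_types, lifting) Un_mono mem_Collect_eq snd_conv subsetI subset_refl)

theorem proposition5p3:
  fixes d :: "'a::finite \<Rightarrow> 'q::finite \<Rightarrow> 'q"
    and r :: "'q \<Rightarrow> 'a \<Rightarrow> 'a"
    and J :: "('q list set \<times> 'q list set) set"
  assumes "connected_aut d"
    and "bireversible d r"
    and "\<forall>v. branch d r v \<and> active v \<longrightarrow> \<not> self_liftable d r (path_edges \<infinity> v)"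
    and "jungle_tree d r J"
  shows "\<exists>C::nat. \<forall>u. cyclic_j_word d r J u \<longrightarrow>
           (\<exists>m. 0 < m \<and> m \<le> C \<and> (rho_u d r u ^^ m) = id)"
proof -
  have rev: "reversible d r" and inv: "invertible d r"
    using assms(2) unfolding bireversible_def by simp_all
  obtain n v e where "0 < n" and path: "is_path d r 0 (enat n) v" and e: "snd e = v n"
    and label: "\<And>f. legit_child d r e f \<Longrightarrow> label f = 1"
    and J: "J \<subseteq> path_edges (enat n) v \<union> {f. lift_edge f e}"
    using jungle_tree_trunk[OF assms(4)] by blast
  obtain w0 where bottom: "v n = orbit d r w0"
    using is_path_vertex_orbit[OF path, of n] by auto
  define C :: nat where "C = fact (card (v n)) * fact (card (UNIV :: ('a \<Rightarrow> 'a) set))"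
  have "rho_u d r u ^^ C = id" if cyclic: "cyclic_j_word d r J u" for u
  proof -
    have windows: "take n (drop k (concat (replicate M u))) \<in> v n" if "k + n \<le> M * length u" for M k
      by (rule cyclic_j_word_windows[OF path \<open>0 < n\<close> J e cyclic that])
    interpret uniquely_extending_windows d r n "v n" u
    proof
      show "inj_on (take n) (orbit d r (take (Suc n) (drop k (concat (replicate M u)))))"
        if "k + Suc n \<le> M * length u" for M k
      proof (rule inj_on_take_orbit_window[OF rev label, where y = w0])
        show "take n (take (Suc n) (drop k (concat (replicate M u)))) \<in> snd e"
          and "drop 1 (take (Suc n) (drop k (concat (replicate M u)))) \<in> snd e"
          using windows[of k M] windows[of "Suc k" M] that by (simp_all add: e drop_take)
      qed (use that in \<open>simp_all add: e bottom\<close>)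
    qed (fact windows | simp add: bottom finite_orbit orbit_subset)+
    show ?thesis
      unfolding C_def by (rule rho_u_funpow_fact_eq_id[OF inv])
  qed
  moreover have "0 < C"
    unfolding C_def by simp
  ultimately show ?thesis
    by blast
qed

end
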